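(* Let $q\in k^\times$ with $q\neq1$, and let $\tau_q\colon k[y]\otimes k[x]\to k[x]\otimes k[y]$ be the twisting map \[\tau_q(y^m\otimes f)=\sum_{i=0}^m \genfrac{[}{]}{0pt}{0}{m}{i}_q\,\theta^i\partial_q^{m-i}(f)\otimes y^i,\] so that $k[x]\otimes_{\tau_q}k[y]$ is the quantized Weyl algebra $A_1^q(k)=k\langle x,y\mid yx-qxy=1\rangle$. Then $\tau_q$ is continuous as a map $k[y]\otimes^!k[x]\to k[x]\otimes^!k[y]$ (for the cofinite topologies on $k[x]$ and $k[y]$) if and only if $q$ is a root of unity.
   Context: $k$ is a field with the discrete topology. $\theta$ is the automorphism $f(x)\mapsto f(qx)$ of $k[x]$ and $\partial_q$ is the $q$-derivative, $\partial_q x^n=[n]_q x^{n-1}$ with $[n]_q=1+q+\dots+q^{n-1}$. The $q$-binomial coefficient $\genfrac{[}{]}{0pt}{0}{m}{i}_q$ is obtained by evaluating at $t=q$ the integer polynomial $[m]_t!/([i]_t![m-i]_t!)$, where $[n]_t!=[n]_t[n-1]_t\cdots[1]_t$. For an algebra $R$, the cofinite topology is the linear topology whose open subspaces are those containing a two-sided ideal of finite codimension. For linearly topologized spaces $E,F$, $E\otimes^!F$ is $E\otimes F$ with the linear topology whose open subspaces contain $E_0\otimes F+E\otimes F_0$ for some open subspaces $E_0\subseteq E$, $F_0\subseteq F$. $k[x]\otimes_\tau k[y]$ is $k[x]\otimes k[y]$ with multiplication $(m\otimes m)\circ(\mathrm{id}\otimes\tau\otimes\mathrm{id})$. *)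

theory Defs
  imports "HOL-Computational_Algebra.Polynomial"
begin

text \<open>The tensor product k[u] \<otimes> k[v]
  is represented as \<open>'a poly poly\<close>: the outer variable is the variable u of the FIRST
  tensor factor, the coefficients (inner polynomials) live in the SECOND factor k[v].\<close>

definition ptens :: "'a::field poly \<Rightarrow> 'a poly \<Rightarrow> 'a poly poly" where
  "ptens e f = map_poly (\<lambda>c. smult c f) e"

definition lsub :: "('k \<Rightarrow> 'v \<Rightarrow> 'v) \<Rightarrow> 'v::ab_group_add set \<Rightarrow> bool" where
  "lsub scl S \<longleftrightarrow> 0 \<in> S \<and> (\<forall>a\<in>S. \<forall>b\<in>S. a + b \<in> S) \<and> (\<forall>c a. a \<in> S \<longrightarrow> scl c a \<in> S)"

definition poly_ideal :: "'a::field poly set \<Rightarrow> bool" where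
  "poly_ideal I \<longleftrightarrow> 0 \<in> I \<and> (\<forall>a\<in>I. \<forall>b\<in>I. a + b \<in> I) \<and>
     (\<forall>p a. a \<in> I \<longrightarrow> p * a \<in> I \<and> a * p \<in> I)"

definition fin_codim :: "'a::field poly set \<Rightarrow> bool" where
  "fin_codim I \<longleftrightarrow> (\<exists>bs :: 'a poly list. \<forall>p. \<exists>cs :: 'a list. length cs = length bs \<and>
      p - (\<Sum>i<length bs. smult (cs ! i) (bs ! i)) \<in> I)"

definition cofinite_open :: "'a::field poly set \<Rightarrow> bool" where
  "cofinite_open U \<longleftrightarrow> lsub smult U \<and> (\<exists>I. poly_ideal I \<and> fin_codim I \<and> I \<subseteq> U)"

definition tens_sub :: "'a::field poly set \<Rightarrow> 'a poly set \<Rightarrow> 'a poly poly set" where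
  "tens_sub A B = {\<Sum>i<n. ptens (es i) (fs i) | (n::nat) (es::nat \<Rightarrow> 'a poly) (fs::nat \<Rightarrow> 'a poly).
      \<forall>i<n. es i \<in> A \<and> fs i \<in> B}"

text \<open>Open subspaces of k[u] \<otimes>^! k[v] (both factors with the cofinite topology).\<close>
definition bang_open :: "'a::field poly poly set \<Rightarrow> bool" where
  "bang_open W \<longleftrightarrow> lsub (\<lambda>c. smult [:c:]) W \<and>
     (\<exists>E0 F0. cofinite_open E0 \<and> cofinite_open F0 \<and>
        {a + b | a b. a \<in> tens_sub E0 UNIV \<and> b \<in> tens_sub UNIV F0} \<subseteq> W)"

definition bang_continuous :: "('a::field poly poly \<Rightarrow> 'a poly poly) \<Rightarrow> bool" where
  "bang_continuous T \<longleftrightarrow> (\<forall>W. bang_open W \<longrightarrow> (\<exists>V. bang_open V \<and> T ` V \<subseteq> W))"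

definition qint :: "'a::comm_ring_1 \<Rightarrow> nat \<Rightarrow> 'a" where
  "qint q n = (\<Sum>i<n. q ^ i)"

definition qderiv :: "'a::field \<Rightarrow> 'a poly \<Rightarrow> 'a poly" where
  "qderiv q f = (\<Sum>n\<le>degree f. monom (qint q n * coeff f n) (n - 1))"

definition theta :: "'a::field \<Rightarrow> 'a poly \<Rightarrow> 'a poly" where
  "theta q f = pcompose f [:0, q:]"

definition tint_poly :: "nat \<Rightarrow> int poly" where
  "tint_poly n = (\<Sum>l<n. monom 1 l)"

definition tfact_poly :: "nat \<Rightarrow> int poly" where
  "tfact_poly n = (\<Prod>j\<in>{1..n}. tint_poly j)"

definition qbinom :: "'a::field \<Rightarrow> nat \<Rightarrow> nat \<Rightarrow> 'a" where
  "qbinom q m i = poly (map_poly of_int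
      (tfact_poly m div (tfact_poly i * tfact_poly (m - i)))) q"

text \<open>Input P = \<Sum>_m y^m \<otimes> coeff P m (outer variable y, inner x);
  output in k[x] \<otimes> k[y] (outer variable x, inner y).\<close>
definition tau :: "'a::field \<Rightarrow> 'a poly poly \<Rightarrow> 'a poly poly" where
  "tau q P = (\<Sum>m\<le>degree P. \<Sum>i\<le>m.
      ptens (smult (qbinom q m i) ((theta q ^^ i) ((qderiv q ^^ (m - i)) (coeff P m))))
            (monom 1 i))"

end

(*
  If q is a primitive d-th root of unity, then x^d and y^d are central in the quantized Weyl
  algebra. On the level of the twisting map: the Gaussian binomials [d choose i]_q vanish for
  0 < i < d, theta^d = id and the d-th power of the q-derivative is zero, so
  tau(y^(m+d) (x) f) = tau(y^m (x) f) y^d; and polynomials in x^d (the theta-invariant ones)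
  commute with theta and the q-derivative. An open subspace W of the target contains
  I (x) k[y] + k[x] (x) J for ideals I, J of finite codimension. Replacing nonzero p in I and
  r in J by their norms under the cyclic group generated by theta, which lie in k[x^d] resp.
  k[y^d] and are still multiples of p resp. r, tau maps N(r) k[y] (x) k[x] + k[y] (x) N(p) k[x]
  into W.

  If q is not a root of unity, no q-integer vanishes, and the constant term of
  tau(y^m (x) r) is [m]_q! times the leading coefficient of r when m = deg r. So no open
  subspace of the source is mapped into the open subspace of tensors with zero constant term.
*)
theory Submission
  imports Defs
begin

section \<open>q-integers and Gaussian binomial coefficients\<close>

lemma map_poly_of_int_add:
  "map_poly (of_int :: int \<Rightarrow> 'a::comm_ring_1) (a + b) = map_poly of_int a + map_poly of_int b"
  by (rule poly_eqI) (simp add: coeff_map_poly)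

lemma map_poly_of_int_mult:
  "map_poly (of_int :: int \<Rightarrow> 'a::comm_ring_1) (a * b) = map_poly of_int a * map_poly of_int b"
  by (rule poly_eqI) (simp add: coeff_map_poly coeff_mult)

lemma qint_mult_q_minus_1: "(q - 1) * qint q n = q ^ n - 1"
  by (induction n) (simp_all add: qint_def algebra_simps)

lemma qint_eq_0_iff: "(q::'a::field) \<noteq> 1 \<Longrightarrow> qint q n = 0 \<longleftrightarrow> q ^ n = 1"
  using qint_mult_q_minus_1[of q n] by auto

lemma poly_tint_poly: "poly (map_poly of_int (tint_poly n)) q = qint q n"
  by (induction n)
    (simp_all add: tint_poly_def qint_def map_poly_of_int_add map_poly_monom poly_monom)

lemma tint_poly_add: "tint_poly (a + b) = tint_poly a + monom 1 a * tint_poly b"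
  by (induction b) (simp_all add: tint_poly_def algebra_simps mult_monom)

lemma tint_poly_nonzero:
  assumes "n > 0"
  shows "tint_poly n \<noteq> 0"
proof -
  have "coeff (tint_poly n) 0 = 1"
    using assms by (simp add: tint_poly_def coeff_sum coeff_monom)
  then show ?thesis
    by auto
qed

lemma tfact_poly_0 [simp]: "tfact_poly 0 = 1"
  by (simp add: tfact_poly_def)

lemma tfact_poly_Suc: "tfact_poly (Suc n) = tint_poly (Suc n) * tfact_poly n"
  by (simp add: tfact_poly_def prod.cl_ivl_Suc mult.commute)

lemma tfact_poly_nonzero: "tfact_poly n \<noteq> 0"
  by (induction n) (simp_all add: tfact_poly_Suc tint_poly_nonzero)

lemma poly_tfact_poly: "poly (map_poly of_int (tfact_poly n)) q = (\<Prod>j\<in>{1..n}. qint q j)"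
  by (induction n)
    (simp_all add: tfact_poly_Suc map_poly_of_int_mult poly_tint_poly prod.cl_ivl_Suc)

fun gauss_poly :: "nat \<Rightarrow> nat \<Rightarrow> int poly" where
  "gauss_poly m 0 = 1"
| "gauss_poly 0 (Suc i) = 0"
| "gauss_poly (Suc m) (Suc i) = gauss_poly m i + monom 1 (Suc i) * gauss_poly m (Suc i)"

lemma gauss_poly_eq_0: "m < i \<Longrightarrow> gauss_poly m i = 0"
  by (induction m i rule: gauss_poly.induct) auto

lemma gauss_poly_self: "gauss_poly m m = 1"
  by (induction m) (simp_all add: gauss_poly_eq_0)

lemma gauss_poly_mult_tfact_poly:
  "i \<le> m \<Longrightarrow> gauss_poly m i * (tfact_poly i * tfact_poly (m - i)) = tfact_poly m"
proof (induction m arbitrary: i)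
  case (Suc m)
  show ?case
  proof (cases i)
    case (Suc j)
    with Suc.prems have "j \<le> m" by simp
    have left: "gauss_poly m j * (tfact_poly (Suc j) * tfact_poly (m - j))
        = tint_poly (Suc j) * tfact_poly m"
      using Suc.IH[OF \<open>j \<le> m\<close>] by (simp add: tfact_poly_Suc algebra_simps)
    have right: "monom 1 (Suc j) * gauss_poly m (Suc j) * (tfact_poly (Suc j) * tfact_poly (m - j))
        = monom 1 (Suc j) * tint_poly (m - j) * tfact_poly m"
    proof (cases "j = m")
      case True
      then show ?thesis by (simp add: gauss_poly_eq_0 tint_poly_def)
    next
      case False
      with \<open>j \<le> m\<close> have "Suc j \<le> m" "m - j = Suc (m - Suc j)" by simp_all
      then show ?thesis
        using Suc.IH[of "Suc j"] by (simp add: tfact_poly_Suc algebra_simps)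
    qed
    have "gauss_poly (Suc m) (Suc j) * (tfact_poly (Suc j) * tfact_poly (Suc m - Suc j))
        = gauss_poly m j * (tfact_poly (Suc j) * tfact_poly (m - j))
          + monom 1 (Suc j) * gauss_poly m (Suc j) * (tfact_poly (Suc j) * tfact_poly (m - j))"
      by (simp add: distrib_right)
    also have "\<dots> = (tint_poly (Suc j) + monom 1 (Suc j) * tint_poly (m - j)) * tfact_poly m"
      by (simp only: left right distrib_right)
    also have "\<dots> = tfact_poly (Suc m)"
      using tint_poly_add[of "Suc j" "m - j"] \<open>j \<le> m\<close> by (simp add: tfact_poly_Suc)
    finally show ?thesis
      using \<open>i = Suc j\<close> by simp
  qed simp
qed simp

text \<open>\<^const>\<open>qbinom\<close> is only meaningful for \<open>i \<le> m\<close> (its definition uses the truncated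
  subtraction \<open>m - i\<close>); this version vanishes for \<open>i > m\<close> and satisfies the q-Pascal rule.\<close>

definition gauss_binomial :: "'a::field \<Rightarrow> nat \<Rightarrow> nat \<Rightarrow> 'a" where
  "gauss_binomial q m i = poly (map_poly of_int (gauss_poly m i)) q"

lemma qbinom_eq_gauss_binomial: "i \<le> m \<Longrightarrow> qbinom q m i = gauss_binomial q m i"
  unfolding qbinom_def gauss_binomial_def
  using gauss_poly_mult_tfact_poly tfact_poly_nonzero
  by (metis mult_eq_0_iff nonzero_mult_div_cancel_right)

lemma gauss_binomial_0 [simp]: "gauss_binomial q m 0 = 1"
  by (simp add: gauss_binomial_def)

lemma gauss_binomial_self [simp]: "gauss_binomial q m m = 1"
  by (simp add: gauss_binomial_def gauss_poly_self)

lemma gauss_binomial_eq_0: "m < i \<Longrightarrow> gauss_binomial q m i = 0"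
  by (simp add: gauss_binomial_def gauss_poly_eq_0)

lemma gauss_binomial_Suc_Suc:
  "gauss_binomial q (Suc m) (Suc i) = gauss_binomial q m i + q ^ Suc i * gauss_binomial q m (Suc i)"
  by (simp add: gauss_binomial_def map_poly_of_int_add map_poly_of_int_mult map_poly_monom
      poly_monom)

lemma gauss_binomial_mult_qfact:
  "i \<le> m \<Longrightarrow> gauss_binomial q m i * (\<Prod>j\<in>{1..i}. qint q j) * (\<Prod>j\<in>{1..m - i}. qint q j)
     = (\<Prod>j\<in>{1..m}. qint q j)"
  using arg_cong[OF gauss_poly_mult_tfact_poly, of i m "\<lambda>p. poly (map_poly of_int p) q"]
  by (simp add: gauss_binomial_def map_poly_of_int_mult poly_tfact_poly mult.assoc)

section \<open>The automorphism theta and the q-derivative\<close>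

lemma coeff_theta: "coeff (theta q g) k = q ^ k * coeff g k"
  by (simp add: theta_def coeff_pcompose_linear)

lemma coeff_theta_funpow: "coeff ((theta q ^^ i) g) k = q ^ (i * k) * coeff g k"
  by (induction i) (simp_all add: coeff_theta power_add)

lemma theta_mult: "theta q (a * b) = theta q a * theta q b"
  by (simp add: theta_def pcompose_mult)

lemma theta_fixed_iff: "theta q N = N \<longleftrightarrow> (\<forall>j. coeff N j \<noteq> 0 \<longrightarrow> q ^ j = 1)"
  by (auto simp: poly_eq_iff coeff_theta)

lemma coeff_qderiv: "coeff (qderiv q g) k = qint q (Suc k) * coeff g (Suc k)"
proof -
  have "coeff (qderiv q g) k = (\<Sum>n\<le>degree g. if n = Suc k then qint q n * coeff g n else 0)"
    unfolding qderiv_def coeff_sum coeff_monom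
  proof (rule sum.cong)
    show "(if n - 1 = k then qint q n * coeff g n else 0)
        = (if n = Suc k then qint q n * coeff g n else 0)" for n
      by (cases n) (auto simp: qint_def)
  qed simp
  then show ?thesis
    by (auto simp: coeff_eq_0)
qed

lemma coeff_qderiv_funpow:
  "coeff ((qderiv q ^^ n) g) k = (\<Prod>j<n. qint q (Suc (k + j))) * coeff g (k + n)"
  by (induction n arbitrary: k)
    (simp_all add: coeff_qderiv prod.lessThan_Suc_shift del: prod.lessThan_Suc)

lemma qderiv_difference_quotient: "smult (q - 1) (pCons 0 (qderiv q g)) = theta q g - g"
proof (rule poly_eqI)
  fix k
  show "coeff (smult (q - 1) (pCons 0 (qderiv q g))) k = coeff (theta q g - g) k"
  proof (cases k)
    case (Suc l)
    have "(q - 1) * (qint q k * coeff g k) = (q ^ k - 1) * coeff g k"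
      by (simp add: qint_mult_q_minus_1 flip: mult.assoc)
    then show ?thesis
      using Suc by (simp add: coeff_theta coeff_qderiv algebra_simps)
  qed (simp add: coeff_theta)
qed

lemma qderiv_mult_theta_fixed:
  assumes "q \<noteq> 1" and "theta q N = N"
  shows "qderiv q (N * g) = N * qderiv q g"
proof -
  have "smult (q - 1) (pCons 0 (qderiv q (N * g))) = theta q (N * g) - N * g"
    by (rule qderiv_difference_quotient)
  also have "\<dots> = N * (theta q g - g)"
    using assms(2) by (simp add: theta_mult algebra_simps)
  also have "\<dots> = N * smult (q - 1) (pCons 0 (qderiv q g))"
    by (simp only: qderiv_difference_quotient)
  also have "\<dots> = smult (q - 1) (pCons 0 (N * qderiv q g))"
    by (simp add: mult_pCons_right)
  finally have "smult (q - 1) (pCons 0 (qderiv q (N * g)))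
      = smult (q - 1) (pCons 0 (N * qderiv q g))" .
  then have "smult (q - 1) (qderiv q (N * g)) = smult (q - 1) (N * qderiv q g)"
    by simp
  then show ?thesis
    using assms(1) smult_cancel[of "q - 1"] by simp
qed

lemma funpow_theta_qderiv_mult_theta_fixed:
  assumes "q \<noteq> 1" and "theta q N = N"
  shows "(theta q ^^ i) ((qderiv q ^^ n) (N * g)) = N * (theta q ^^ i) ((qderiv q ^^ n) g)"
proof -
  have "(qderiv q ^^ n) (N * g) = N * (qderiv q ^^ n) g"
    by (induction n) (simp_all add: qderiv_mult_theta_fixed[OF assms])
  moreover have "(theta q ^^ i) (N * h) = N * (theta q ^^ i) h" for h
    by (induction i) (simp_all add: theta_mult assms(2))
  ultimately show ?thesis
    by simp
qed

section \<open>The twisting map\<close>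

lemma smult_sum_right: "smult c (\<Sum>i\<in>S. f i) = (\<Sum>i\<in>S. smult c (f i))"
  by (induction S rule: infinite_finite_induct) (simp_all add: smult_add_right)

lemma coeff_ptens: "coeff (ptens e f) k = smult (coeff e k) f"
  by (simp add: ptens_def coeff_map_poly)

lemma ptens_monom: "ptens (monom 1 k) c = monom c k"
  by (rule poly_eqI) (simp add: coeff_ptens coeff_monom)

lemma smult_ptens: "smult G (ptens a b) = ptens a (G * b)"
  by (rule poly_eqI) (simp add: coeff_ptens)

text \<open>\<^term>\<open>map_poly (\<lambda>x. [:x:]) a\<close> is the pure tensor \<open>a \<otimes> 1\<close>.\<close>

lemma ptens_mult_left:
  "ptens (a * b) (f :: 'a::field poly) = map_poly (\<lambda>x. [:x:]) a * ptens b f"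
  by (rule poly_eqI)
    (simp add: coeff_mult coeff_ptens coeff_map_poly smult_sum mult.commute[where 'a = 'a])

definition tau_monom :: "'a::field \<Rightarrow> nat \<Rightarrow> 'a poly \<Rightarrow> 'a poly poly" where
  "tau_monom q m f = (\<Sum>i\<le>m.
     ptens (smult (qbinom q m i) ((theta q ^^ i) ((qderiv q ^^ (m - i)) f))) (monom 1 i))"

lemma coeff_coeff_tau_monom:
  "coeff (coeff (tau_monom q m f) k) i =
     (if i \<le> m then gauss_binomial q m i * q ^ (i * k) * (\<Prod>j<m - i. qint q (Suc (k + j)))
        * coeff f (k + (m - i)) else 0)"
proof -
  have "coeff (coeff (tau_monom q m f) k) i = (\<Sum>j\<le>m. if i = j then
      qbinom q m j * coeff ((theta q ^^ j) ((qderiv q ^^ (m - j)) f)) k else 0)"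
    unfolding tau_monom_def coeff_sum
    by (rule sum.cong) (simp_all add: coeff_ptens coeff_monom)
  then show ?thesis
    by (simp add: qbinom_eq_gauss_binomial coeff_theta_funpow coeff_qderiv_funpow)
qed

text \<open>Left multiplication by \<open>y\<close>, via the relation \<open>y x^k = q^k x^k y + [k]_q x^(k-1)\<close>
  of the quantized Weyl algebra.\<close>

lemma coeff_coeff_tau_monom_Suc:
  "coeff (coeff (tau_monom q (Suc m) f) k) i =
     (if i = 0 then 0 else q ^ k * coeff (coeff (tau_monom q m f) k) (i - 1))
     + qint q (Suc k) * coeff (coeff (tau_monom q m f) (Suc k)) i"
proof (cases i)
  case (Suc j)
  consider "m < j" | "j = m" | "j < m"
    by linarith
  then show ?thesis
  proof cases
    case 3
    then have "m - j = Suc (m - Suc j)"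
      by simp
    then have "(\<Prod>l<m - j. qint q (Suc (k + l)))
        = qint q (Suc k) * (\<Prod>l<m - Suc j. qint q (Suc (Suc k + l)))"
      by (simp add: prod.lessThan_Suc_shift del: prod.lessThan_Suc)
    moreover have "Suc k + (m - Suc j) = k + (m - j)"
      using 3 by simp
    ultimately show ?thesis
      using Suc 3
      by (simp add: coeff_coeff_tau_monom gauss_binomial_Suc_Suc algebra_simps power_add)
  qed (use Suc in \<open>simp_all add: coeff_coeff_tau_monom gauss_binomial_eq_0 algebra_simps power_add\<close>)
qed (simp add: coeff_coeff_tau_monom prod.lessThan_Suc_shift del: prod.lessThan_Suc)

lemma tau_monom_add: "tau_monom q m (f + g) = tau_monom q m f + tau_monom q m g"
  by (intro poly_eqI) (simp add: coeff_coeff_tau_monom algebra_simps)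

lemma tau_monom_smult: "tau_monom q m (smult c f) = smult [:c:] (tau_monom q m f)"
  by (intro poly_eqI) (simp add: coeff_coeff_tau_monom algebra_simps)

lemma tau_monom_0 [simp]: "tau_monom q m 0 = 0"
  by (intro poly_eqI) (simp add: coeff_coeff_tau_monom)

lemma tau_eq_sum_tau_monom: "tau q P = (\<Sum>m\<le>degree P. tau_monom q m (coeff P m))"
  by (simp add: tau_def tau_monom_def)

lemma tau_eq_sum_tau_monom_le:
  "degree P \<le> n \<Longrightarrow> tau q P = (\<Sum>m\<le>n. tau_monom q m (coeff P m))"
  unfolding tau_eq_sum_tau_monom
  by (rule sum.mono_neutral_left) (auto simp: coeff_eq_0)

lemma tau_monom_conv: "tau q (monom f m) = tau_monom q m f"
proof -
  have "tau_monom q l (coeff (monom f m) l) = (if l = m then tau_monom q m f else 0)" for l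
    by (simp add: coeff_monom)
  then show ?thesis
    by (simp add: tau_eq_sum_tau_monom_le[of _ m] degree_monom_le)
qed

lemma tau_add: "tau q (P + Q) = tau q P + tau q Q"
proof -
  define n where "n = max (degree P) (degree Q)"
  have "degree P \<le> n" "degree Q \<le> n" "degree (P + Q) \<le> n"
    by (simp_all add: n_def degree_add_le)
  then show ?thesis
    by (simp add: tau_eq_sum_tau_monom_le[of _ n] tau_monom_add sum.distrib)
qed

lemma tau_smult: "tau q (smult [:c:] P) = smult [:c:] (tau q P)"
  by (simp add: tau_eq_sum_tau_monom_le[of _ "degree P"] degree_smult_le tau_monom_smult
      smult_sum_right)

lemma tau_0 [simp]: "tau q 0 = 0"
  by (simp add: tau_eq_sum_tau_monom)

lemma tau_sum: "tau q (\<Sum>i\<in>S. P i) = (\<Sum>i\<in>S. tau q (P i))"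
  by (induction S rule: infinite_finite_induct) (simp_all add: tau_add)

lemma tau_monom_mult_theta_fixed:
  assumes "q \<noteq> 1" and "theta q N = N"
  shows "tau_monom q m (N * f) = map_poly (\<lambda>x. [:x:]) N * tau_monom q m f"
  unfolding tau_monom_def sum_distrib_left
  by (rule sum.cong) (simp_all add: funpow_theta_qderiv_mult_theta_fixed[OF assms]
      mult_smult_right[symmetric] ptens_mult_left del: mult_smult_right)

lemma tau_smult_theta_fixed:
  assumes "q \<noteq> 1" and "theta q N = N"
  shows "tau q (smult N P) = map_poly (\<lambda>x. [:x:]) N * tau q P"
  by (simp add: tau_eq_sum_tau_monom_le[of "smult N P" "degree P"] degree_smult_le
      tau_monom_mult_theta_fixed[OF assms] tau_eq_sum_tau_monom sum_distrib_left)

section \<open>Primitive roots of unity\<close>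

locale primitive_root =
  fixes q :: "'a::field" and d :: nat
  assumes order_gt_1: "1 < d"
    and power_eq_1_iff: "q ^ j = 1 \<longleftrightarrow> d dvd j"
begin

lemma neq_1: "q \<noteq> 1"
  using power_eq_1_iff[of 1] order_gt_1 by auto

lemma nonzero: "q \<noteq> 0"
  using power_eq_1_iff[of d] order_gt_1 by (auto simp: power_0_left)

lemma qint_eq_0_iff_dvd: "qint q j = 0 \<longleftrightarrow> d dvd j"
  by (simp add: qint_eq_0_iff[OF neq_1] power_eq_1_iff)

lemma prod_qint_eq_0:
  assumes "d \<le> n"
  shows "(\<Prod>j<n. qint q (Suc (k + j))) = 0"
proof -
  define j where "j = d + d * (k div d) - Suc k"
  have "k = d * (k div d) + k mod d" "k mod d < d"
    using order_gt_1 by simp_all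
  then have bounds: "d * (k div d) \<le> k" "k < d + d * (k div d)"
    by linarith+
  then have "j < n"
    using assms unfolding j_def by linarith
  moreover have "Suc (k + j) = d + d * (k div d)"
    using bounds unfolding j_def by linarith
  ultimately show ?thesis
    by (auto simp: qint_eq_0_iff_dvd intro!: bexI[of _ j])
qed

lemma gauss_binomial_order_eq_0:
  assumes "0 < i" and "i < d"
  shows "gauss_binomial q d i = 0"
proof -
  have "(\<Prod>j\<in>{1..d}. qint q j) = 0"
    by (rule prod_zero) (use order_gt_1 in \<open>auto simp: qint_eq_0_iff_dvd intro!: bexI[of _ d]\<close>)
  then have "gauss_binomial q d i * (\<Prod>j\<in>{1..i}. qint q j) * (\<Prod>j\<in>{1..d - i}. qint q j) = 0"
    using gauss_binomial_mult_qfact[of i d q] assms(2) by (metis less_imp_le)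
  moreover have "(\<Prod>j\<in>{1..l}. qint q j) \<noteq> 0" if "l < d" for l
    using that by (auto simp: qint_eq_0_iff_dvd dest: dvd_imp_le)
  then have "(\<Prod>j\<in>{1..i}. qint q j) \<noteq> 0" "(\<Prod>j\<in>{1..d - i}. qint q j) \<noteq> 0"
    using assms diff_less[of i d] by blast+
  ultimately show ?thesis
    by (metis mult_eq_0_iff)
qed

lemma tau_monom_add_order: "tau_monom q (m + d) f = smult (monom 1 d) (tau_monom q m f)"
proof -
  have "coeff (coeff (tau_monom q (m + d) f) k) i
      = (if i < d then 0 else coeff (coeff (tau_monom q m f) k) (i - d))" for k i
  proof (induction m arbitrary: k i)
    case 0
    consider "i = 0" | "0 < i" "i < d" | "d \<le> i"
      by linarith
    then show ?case
    proof cases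
      case 1
      then show ?thesis
        using prod_qint_eq_0[of d k] by (simp add: coeff_coeff_tau_monom)
    next
      case 2
      then show ?thesis
        using gauss_binomial_order_eq_0 by (simp add: coeff_coeff_tau_monom)
    next
      case 3
      then show ?thesis
        using power_eq_1_iff[of "d * k"]
        by (cases "i = d") (simp_all add: coeff_coeff_tau_monom mult.commute)
    qed
  next
    case (Suc m)
    show ?case
      using order_gt_1
      by (simp add: coeff_coeff_tau_monom_Suc[of q "m + d"] Suc.IH coeff_coeff_tau_monom_Suc[of q m]
          Suc_diff_le; arith)
  qed
  then show ?thesis
    by (intro poly_eqI) (simp add: coeff_monom_mult)
qed

end

definition theta_norm :: "'a::field \<Rightarrow> nat \<Rightarrow> 'a poly \<Rightarrow> 'a poly" where
  "theta_norm q d p = (\<Prod>j<d. (theta q ^^ j) p)"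

context primitive_root
begin

lemma tau_monom_add_multiple:
  assumes "d dvd n"
  shows "tau_monom q (m + n) f = smult (monom 1 n) (tau_monom q m f)"
proof -
  from assms obtain t where "n = d * t"
    by blast
  moreover have "tau_monom q (m + d * t) f = smult (monom 1 (d * t)) (tau_monom q m f)"
  proof (induction t)
    case (Suc t)
    have "tau_monom q (m + d * Suc t) f = tau_monom q (m + d * t + d) f"
      by (simp add: algebra_simps)
    also have "\<dots> = smult (monom 1 d * monom 1 (d * t)) (tau_monom q m f)"
      by (simp add: tau_monom_add_order Suc.IH)
    finally show ?case
      by (simp add: mult_monom)
  qed simp
  ultimately show ?thesis
    by simp
qed

lemma tau_monom_one_mult:
  assumes "d dvd n"
  shows "tau q (monom 1 n * P) = smult (monom 1 n) (tau q P)"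
proof -
  have "monom 1 n * P = (\<Sum>m\<le>degree P. monom (coeff P m) (m + n))"
    by (subst (1) poly_as_sum_of_monoms[symmetric])
      (simp add: sum_distrib_left mult_monom add.commute)
  then have "tau q (monom 1 n * P) = (\<Sum>m\<le>degree P. tau_monom q (m + n) (coeff P m))"
    by (simp add: tau_sum tau_monom_conv)
  also have "\<dots> = smult (monom 1 n) (tau q P)"
    using assms by (simp add: tau_monom_add_multiple tau_eq_sum_tau_monom smult_sum_right)
  finally show ?thesis .
qed

lemma tau_lift_mult:
  assumes "\<And>j. coeff G j \<noteq> 0 \<Longrightarrow> d dvd j"
  shows "tau q (map_poly (\<lambda>x. [:x:]) G * P) = smult G (tau q P)"
proof -
  have "map_poly (\<lambda>x. [:x:]) G * P = (\<Sum>j\<le>degree G. smult [:coeff G j:] (monom 1 j * P))"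
  proof -
    have "map_poly (\<lambda>x. [:x:]) G = (\<Sum>j\<le>degree G. monom [:coeff G j:] j)"
      by (rule poly_eqI) (auto simp: coeff_map_poly coeff_sum coeff_monom coeff_eq_0)
    moreover have "monom [:c:] j * P = smult [:c:] (monom 1 j * P)" for c j
      by (metis mult_smult_left smult_monom mult.right_neutral)
    ultimately show ?thesis
      by (simp add: sum_distrib_right)
  qed
  also have "tau q \<dots> = (\<Sum>j\<le>degree G. smult (monom (coeff G j) j) (tau q P))"
  proof (subst tau_sum, rule sum.cong[OF refl])
    fix j
    show "tau q (smult [:coeff G j:] (monom 1 j * P)) = smult (monom (coeff G j) j) (tau q P)"
      using assms by (cases "coeff G j = 0")
        (simp_all add: tau_smult tau_monom_one_mult smult_smult smult_monom)
  qed
  also have "\<dots> = smult G (tau q P)"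
    by (simp add: smult_sum[symmetric] poly_as_sum_of_monoms)
  finally show ?thesis .
qed

lemma theta_funpow_order: "(theta q ^^ d) p = p"
  using power_eq_1_iff[of d] by (simp add: poly_eq_iff coeff_theta_funpow power_mult)

lemma theta_norm_nonzero:
  assumes "p \<noteq> 0"
  shows "theta_norm q d p \<noteq> 0"
proof -
  have "(theta q ^^ j) p \<noteq> 0" for j
    using assms nonzero by (auto simp: poly_eq_iff coeff_theta_funpow)
  then show ?thesis
    by (simp add: theta_norm_def)
qed

lemma dvd_theta_norm: "p dvd theta_norm q d p"
  using order_gt_1 dvd_prodI[of "{..<d}" 0 "\<lambda>j. (theta q ^^ j) p"] by (simp add: theta_norm_def)

lemma theta_theta_norm: "theta q (theta_norm q d p) = theta_norm q d p"
proof -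
  obtain e where d: "d = Suc e"
    using order_gt_1 by (cases d) auto
  define f where "f j = (theta q ^^ j) p" for j
  have "theta q (theta_norm q d p) = (\<Prod>j<d. f (Suc j))"
    by (simp add: theta_norm_def f_def theta_def pcompose_prod)
  also have "\<dots> = (\<Prod>j<e. f (Suc j)) * f d"
    by (simp add: d)
  also have "\<dots> = f 0 * (\<Prod>j<e. f (Suc j))"
    by (simp add: f_def theta_funpow_order)
  also have "\<dots> = theta_norm q d p"
    unfolding theta_norm_def d prod.lessThan_Suc_shift f_def ..
  finally show ?thesis .
qed

lemma coeff_theta_norm_nonzero: "coeff (theta_norm q d p) j \<noteq> 0 \<Longrightarrow> d dvd j"
  using theta_theta_norm[of p] by (simp add: theta_fixed_iff power_eq_1_iff)

end

lemma primitive_root_exists: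
  fixes q :: "'a::field"
  assumes "q \<noteq> 1" and "0 < n" and "q ^ n = 1"
  obtains d where "primitive_root q d"
proof
  define d where "d = (LEAST n. 0 < n \<and> q ^ n = 1)"
  have d: "0 < d" "q ^ d = 1"
    using LeastI[of "\<lambda>n. 0 < n \<and> q ^ n = 1" n] assms(2,3) unfolding d_def by auto
  have "d dvd j" if "q ^ j = 1" for j
  proof -
    have "q ^ j = (q ^ d) ^ (j div d) * q ^ (j mod d)"
      by (simp flip: power_mult power_add)
    then have "q ^ (j mod d) = 1"
      using that d(2) by simp
    then have "\<not> 0 < j mod d"
      using not_less_Least[of "j mod d" "\<lambda>n. 0 < n \<and> q ^ n = 1"] d(1) unfolding d_def by auto
    then show ?thesis
      by (simp add: mod_eq_0_iff_dvd)
  qed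
  moreover have "1 < d"
    using d assms(1) by (cases "d = 1") auto
  ultimately show "primitive_root q d"
    using d by unfold_locales (auto simp: power_mult elim!: dvdE)
qed

section \<open>Open subspaces\<close>

lemma lsub_sum:
  assumes "lsub scl W" and "\<And>i. i \<in> S \<Longrightarrow> g i \<in> W"
  shows "sum g S \<in> W"
  using assms(2)
  by (induction S rule: infinite_finite_induct) (use assms(1) in \<open>auto simp: lsub_def\<close>)

lemma fin_codim_nonzero:
  assumes "fin_codim (I :: 'a::field poly set)"
  obtains p where "p \<in> I" and "p \<noteq> 0"
proof -
  obtain bs :: "'a poly list" where bs: "\<forall>p. \<exists>cs :: 'a list. length cs = length bs \<and>
      p - (\<Sum>i<length bs. smult (cs ! i) (bs ! i)) \<in> I"
    using assms unfolding fin_codim_def by blast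
  define D where "D = Suc (\<Sum>i<length bs. degree (bs ! i))"
  obtain cs :: "'a list" where cs: "monom 1 D - (\<Sum>i<length bs. smult (cs ! i) (bs ! i)) \<in> I"
    using bs by blast
  have "degree (bs ! i) < D" if "i < length bs" for i
    using that member_le_sum[of i "{..<length bs}" "\<lambda>i. degree (bs ! i)"] by (simp add: D_def)
  then have "coeff (monom 1 D - (\<Sum>i<length bs. smult (cs ! i) (bs ! i))) D = 1"
    by (simp add: coeff_sum coeff_eq_0)
  then have "monom 1 D - (\<Sum>i<length bs. smult (cs ! i) (bs ! i)) \<noteq> 0"
    by (metis coeff_0 zero_neq_one)
  with cs show ?thesis
    by (rule that)
qed

lemma cofinite_open_principal:
  fixes G :: "'a::field poly"
  assumes "G \<noteq> 0"
  shows "cofinite_open (range ((*) G))"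
proof -
  have ideal: "poly_ideal (range ((*) G))"
    unfolding poly_ideal_def image_def
    by (auto simp: distrib_left[symmetric] mult.left_commute mult.assoc)
  have "fin_codim (range ((*) G))"
    unfolding fin_codim_def
  proof (rule exI, intro allI)
    fix p :: "'a poly"
    let ?bs = "map (monom 1) [0..<degree G]" and ?cs = "map (coeff (p mod G)) [0..<degree G]"
    have "(\<Sum>i<length ?bs. smult (?cs ! i) (?bs ! i)) = p mod G"
    proof (rule poly_eqI)
      fix n
      have "coeff (p mod G) n = 0" if "degree G \<le> n"
        using that degree_mod_less'[OF assms, of p] by (cases "p mod G = 0") (auto simp: coeff_eq_0)
      then show "coeff (\<Sum>i<length ?bs. smult (?cs ! i) (?bs ! i)) n = coeff (p mod G) n"
        by (auto simp: coeff_sum coeff_monom smult_monom)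
    qed
    moreover have "p - p mod G = G * (p div G)"
      by (simp add: mod_div_mult_eq[symmetric] algebra_simps)
    ultimately show "\<exists>cs. length cs = length ?bs \<and>
        p - (\<Sum>i<length ?bs. smult (cs ! i) (?bs ! i)) \<in> range ((*) G)"
      by (intro exI[of _ ?cs]) (simp add: rangeI)
  qed
  moreover have "lsub smult (range ((*) G))"
    using ideal unfolding lsub_def poly_ideal_def image_def
    by (auto simp: mult_smult_right[symmetric] simp del: mult_smult_right)
  ultimately show ?thesis
    using ideal unfolding cofinite_open_def by blast
qed

lemma ptens_mem_tens_sub: "a \<in> A \<Longrightarrow> b \<in> B \<Longrightarrow> ptens a b \<in> tens_sub A B"
  unfolding tens_sub_def by (rule CollectI, rule exI[of _ 1]) auto

lemma zero_mem_tens_sub: "0 \<in> tens_sub A B"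
  unfolding tens_sub_def by (rule CollectI, rule exI[of _ 0]) simp

lemma tens_sub_subset:
  assumes "lsub scl W" and "\<And>a b. a \<in> A \<Longrightarrow> b \<in> B \<Longrightarrow> ptens a b \<in> W"
  shows "tens_sub A B \<subseteq> W"
  unfolding tens_sub_def using assms by (auto intro!: lsub_sum)

lemma bang_open_iff:
  "bang_open W \<longleftrightarrow> lsub (\<lambda>c. smult [:c:]) W \<and>
     (\<exists>p r. p \<noteq> 0 \<and> r \<noteq> 0 \<and> (\<forall>a b. ptens (p * a) b \<in> W) \<and> (\<forall>a b. ptens a (r * b) \<in> W))"
  (is "_ \<longleftrightarrow> ?lsub \<and> ?principal")
proof
  assume "bang_open W"
  then obtain E F where "?lsub" "cofinite_open E" "cofinite_open F"
    and sums: "{a + b | a b. a \<in> tens_sub E UNIV \<and> b \<in> tens_sub UNIV F} \<subseteq> W"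
    unfolding bang_open_def by blast
  then obtain I J where I: "poly_ideal I" "fin_codim I" "I \<subseteq> E"
    and J: "poly_ideal J" "fin_codim J" "J \<subseteq> F"
    unfolding cofinite_open_def by blast
  obtain p r where "p \<in> I" "p \<noteq> 0" "r \<in> J" "r \<noteq> 0"
    using fin_codim_nonzero[OF I(2)] fin_codim_nonzero[OF J(2)] by metis
  moreover have WE: "ptens a b \<in> W" if "a \<in> E" for a b
  proof -
    have "ptens a b + 0 \<in> {a + b | a b. a \<in> tens_sub E UNIV \<and> b \<in> tens_sub UNIV F}"
      using ptens_mem_tens_sub[OF that] zero_mem_tens_sub by blast
    then show ?thesis
      using sums by auto
  qed
  moreover have WF: "ptens a b \<in> W" if "b \<in> F" for a b
  proof -
    have "0 + ptens a b \<in> {a + b | a b. a \<in> tens_sub E UNIV \<and> b \<in> tens_sub UNIV F}"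
      using ptens_mem_tens_sub[OF _ that] zero_mem_tens_sub by blast
    then show ?thesis
      using sums by auto
  qed
  moreover have "p * a \<in> E" "r * b \<in> F" for a b
    using I J \<open>p \<in> I\<close> \<open>r \<in> J\<close> unfolding poly_ideal_def by blast+
  ultimately show "?lsub \<and> ?principal"
    using \<open>?lsub\<close> by (intro conjI exI[of _ p] exI[of _ r]) (simp_all add: WE WF)
next
  assume "?lsub \<and> ?principal"
  then obtain p r where W: "?lsub" "p \<noteq> 0" "r \<noteq> 0"
    "\<And>a b. ptens (p * a) b \<in> W" "\<And>a b. ptens a (r * b) \<in> W"
    by blast
  have "tens_sub (range ((*) p)) UNIV \<subseteq> W" "tens_sub UNIV (range ((*) r)) \<subseteq> W"
    by (rule tens_sub_subset[OF W(1)], use W(4,5) in force)+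
  then have "{a + b | a b. a \<in> tens_sub (range ((*) p)) UNIV \<and>
      b \<in> tens_sub UNIV (range ((*) r))} \<subseteq> W"
    using W(1) unfolding lsub_def by blast
  then show "bang_open W"
    unfolding bang_open_def using W(1-3) cofinite_open_principal by blast
qed

lemma lift_mult_mem:
  assumes "lsub scl W" and "\<And>a b. ptens (p * a) b \<in> W"
  shows "map_poly (\<lambda>x. [:x:]) p * X \<in> W"
proof -
  have "map_poly (\<lambda>x. [:x:]) p * X
      = map_poly (\<lambda>x. [:x:]) p * (\<Sum>k\<le>degree X. ptens (monom 1 k) (coeff X k))"
    by (simp add: ptens_monom poly_as_sum_of_monoms)
  also have "\<dots> = (\<Sum>k\<le>degree X. ptens (p * monom 1 k) (coeff X k))"
    by (simp add: sum_distrib_left ptens_mult_left)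
  finally show ?thesis
    using assms(2) by (auto intro: lsub_sum[OF assms(1)])
qed

lemma smult_mem:
  assumes "lsub scl W" and "\<And>a b. ptens a (r * b) \<in> W"
  shows "smult r X \<in> W"
proof -
  have "smult r X = smult r (\<Sum>k\<le>degree X. ptens (monom 1 k) (coeff X k))"
    by (simp add: ptens_monom poly_as_sum_of_monoms)
  also have "\<dots> = (\<Sum>k\<le>degree X. ptens (monom 1 k) (r * coeff X k))"
    by (simp add: smult_sum_right smult_ptens)
  finally show ?thesis
    using assms(2) by (auto intro: lsub_sum[OF assms(1)])
qed

lemma lsub_vimage_tau: "lsub (\<lambda>c. smult [:c:]) W \<Longrightarrow> lsub (\<lambda>c. smult [:c:]) {P. tau q P \<in> W}"
  by (simp add: lsub_def tau_add tau_smult)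

section \<open>Continuity of the twisting map\<close>

lemma (in primitive_root) bang_continuous_tau: "bang_continuous (tau q)"
  unfolding bang_continuous_def
proof (intro allI impI)
  fix W :: "'a poly poly set"
  assume "bang_open W"
  then obtain p r where W: "lsub (\<lambda>c. smult [:c:]) W" "p \<noteq> 0" "r \<noteq> 0"
    "\<And>a b. ptens (p * a) b \<in> W" "\<And>a b. ptens a (r * b) \<in> W"
    unfolding bang_open_iff by blast
  define P R where "P = theta_norm q d p" and "R = theta_norm q d r"
  have W_P: "ptens (P * a) b \<in> W" and W_R: "ptens a (R * b) \<in> W" for a b
    using dvd_theta_norm[of p] dvd_theta_norm[of r] W(4,5) unfolding P_def R_def
    by (auto elim!: dvdE simp: mult.assoc)
  have "ptens (R * c) f \<in> {X. tau q X \<in> W}" for c f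
  proof -
    have "tau q (ptens (R * c) f) = smult R (tau q (ptens c f))"
      unfolding ptens_mult_left R_def by (rule tau_lift_mult[OF coeff_theta_norm_nonzero])
    then show ?thesis
      using smult_mem[OF W(1) W_R] by simp
  qed
  moreover have "ptens e (P * h) \<in> {X. tau q X \<in> W}" for e h
  proof -
    have "tau q (ptens e (P * h)) = map_poly (\<lambda>x. [:x:]) P * tau q (ptens e h)"
      unfolding smult_ptens[symmetric] P_def
      by (rule tau_smult_theta_fixed[OF neq_1 theta_theta_norm])
    then show ?thesis
      using lift_mult_mem[OF W(1) W_P] by simp
  qed
  moreover have "R \<noteq> 0" "P \<noteq> 0"
    using W(2,3) theta_norm_nonzero unfolding P_def R_def by blast+
  ultimately have "bang_open {X. tau q X \<in> W}"
    unfolding bang_open_iff using lsub_vimage_tau[OF W(1)] by blast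
  then show "\<exists>V. bang_open V \<and> tau q ` V \<subseteq> W"
    by blast
qed

lemma tau_not_bang_continuous:
  fixes q :: "'a::field"
  assumes "q \<noteq> 1" and "\<And>n. 0 < n \<Longrightarrow> q ^ n \<noteq> 1"
  shows "\<not> bang_continuous (tau q)"
proof
  define W :: "'a poly poly set" where "W = {X. coeff (coeff X 0) 0 = 0}"
  \<comment> \<open>the open subspace \<open>(x) \<otimes> k[y] + k[x] \<otimes> (y)\<close>\<close>
  have "bang_open W"
    unfolding bang_open_iff W_def lsub_def
    by (intro conjI exI[of _ "[:0, 1:]"]) (simp_all add: coeff_ptens)
  moreover assume "bang_continuous (tau q)"
  ultimately obtain V where "bang_open V" "tau q ` V \<subseteq> W"
    unfolding bang_continuous_def by blast
  then obtain r where "r \<noteq> 0" and r: "\<And>a b. ptens a (r * b) \<in> V"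
    unfolding bang_open_iff by blast
  from r[of "monom 1 (degree r)" 1] have "monom r (degree r) \<in> V"
    by (simp add: ptens_monom)
  then have "coeff (coeff (tau_monom q (degree r) r) 0) 0 = 0"
    using \<open>tau q ` V \<subseteq> W\<close> by (auto simp: W_def tau_monom_conv[symmetric])
  moreover have "qint q (Suc j) \<noteq> 0" for j
    using assms qint_eq_0_iff[of q "Suc j"] by blast
  ultimately show False
    using \<open>r \<noteq> 0\<close> by (simp add: coeff_coeff_tau_monom)
qed

theorem lemma5p1:
  fixes q :: "'a::field"
  assumes "q \<noteq> 0" and "q \<noteq> 1"
  shows "bang_continuous (tau q) \<longleftrightarrow> (\<exists>n>0. q ^ n = 1)"
proof
  assume "bang_continuous (tau q)"
  then show "\<exists>n>0. q ^ n = 1"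
    using tau_not_bang_continuous assms(2) by blast
next
  assume "\<exists>n>0. q ^ n = 1"
  then obtain d where "primitive_root q d"
    using primitive_root_exists assms(2) by blast
  then show "bang_continuous (tau q)"
    by (rule primitive_root.bang_continuous_tau)
qed

end
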